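(* Let $a\ge a_0$. If $(DFE_a)$ admits a solution on $\mathbf V$, then there is a cycle $\xi$ in $\mathbf X$ with $\sigma_a(\xi)=0$.
   Context: Network $\Gamma$ with finite arcs $\mathcal E$ closed under inversion, vertices $\mathbf V$, connected; Hamiltonians $H_\gamma$ continuous, coercive, quasiconvex with $\mathrm{Int}\{H_\gamma(s,\cdot)\le b\}=\{H_\gamma(s,\cdot)<b\}$, $H_{\tilde\gamma}(s,p)=H_\gamma(1-s,-p)$; $a_0$ = max of $\max_s\min_pH_\gamma$ over non-closed arcs and of $c_\gamma$ (least level admitting a periodic viscosity subsolution) over closed arcs. Graph $\mathbf X=(\mathbf V,\mathbf E)$, bijection $\Psi:\mathbf E\to\mathcal E$, $\mathrm o(e)=\Psi(e)(0)$, $\mathrm t(e)=\Psi(e)(1)$, $-e=\Psi^{-1}(\widetilde{\Psi(e)})$, $\mathbf E_x=\{e:\mathrm o(e)=x\}$, $\sigma_a(e)=\int_0^1\max\{p:H_{\Psi(e)}(t,p)=a\}dt$. Cycle: $\xi=(e_1,\dots,e_M)$, $M\ge1$, $\mathrm t(e_j)=\mathrm o(e_{j+1})$, $\mathrm t(e_M)=\mathrm o(e_1)$; $\sigma_a(\xi)=\sum\sigma_a(e_i)$. $(DFE_a)$: $u(x)=\min_{e\in\mathbf E_x}(u(\mathrm t(e))+\sigma_a(-e))$ for all $x\in\mathbf V$. *)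

theory Defs
  imports "HOL-Analysis.Analysis"
begin

text \<open>Abstract graph X = (V, E): edges are identified with the arcs via the bijection Psi.
  org e = o(e) = Psi(e)(0), tgt e = t(e) = Psi(e)(1), inv_arc e = -e (the reversed arc).\<close>

definition graph_ok :: "'v set \<Rightarrow> 'e set \<Rightarrow> ('e \<Rightarrow> 'v) \<Rightarrow> ('e \<Rightarrow> 'v) \<Rightarrow> ('e \<Rightarrow> 'e) \<Rightarrow> bool" where
  "graph_ok V E org tgt inv_arc \<longleftrightarrow>
     finite V \<and> finite E \<and> E \<noteq> {} \<and>
     (\<forall>e\<in>E. org e \<in> V \<and> tgt e \<in> V \<and> inv_arc e \<in> E \<and> inv_arc e \<noteq> e \<and> inv_arc (inv_arc e) = e \<and>
              org (inv_arc e) = tgt e \<and> tgt (inv_arc e) = org e)"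

definition graph_connected :: "'v set \<Rightarrow> 'e set \<Rightarrow> ('e \<Rightarrow> 'v) \<Rightarrow> ('e \<Rightarrow> 'v) \<Rightarrow> bool" where
  "graph_connected V E org tgt \<longleftrightarrow>
     (\<forall>x\<in>V. \<forall>y\<in>V. (x, y) \<in> {(org e, tgt e) | e. e \<in> E}\<^sup>*)"

definition hamiltonian_ok :: "(real \<Rightarrow> real \<Rightarrow> real) \<Rightarrow> bool" where
  "hamiltonian_ok h \<longleftrightarrow>
     continuous_on ({0..1} \<times> UNIV) (\<lambda>(s, p). h s p) \<and>
     (\<forall>M. \<exists>R. \<forall>s\<in>{0..1}. \<forall>p. \<bar>p\<bar> \<ge> R \<longrightarrow> h s p \<ge> M) \<and>
     (\<forall>s\<in>{0..1}. \<forall>b. convex {p. h s p \<le> b}) \<and>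
     (\<forall>s\<in>{0..1}. \<forall>b. interior {p. h s p \<le> b} = {p. h s p < b})"

definition periodic_visc_subsol :: "(real \<Rightarrow> real \<Rightarrow> real) \<Rightarrow> real \<Rightarrow> (real \<Rightarrow> real) \<Rightarrow> bool" where
  "periodic_visc_subsol h b u \<longleftrightarrow>
     continuous_on UNIV u \<and> (\<forall>s. u (s + 1) = u s) \<and>
     (\<forall>x \<phi> \<phi>'. (\<forall>y. (\<phi> has_real_derivative \<phi>' y) (at y)) \<and> continuous_on UNIV \<phi>' \<and>
        (\<exists>\<delta>>0. \<forall>y. \<bar>y - x\<bar> < \<delta> \<longrightarrow> u y - \<phi> y \<le> u x - \<phi> x)
        \<longrightarrow> h (frac x) (\<phi>' x) \<le> b)"

definition crit_closed :: "(real \<Rightarrow> real \<Rightarrow> real) \<Rightarrow> real" where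
  "crit_closed h = Inf {b. \<exists>u. periodic_visc_subsol h b u}"

definition a0 :: "'e set \<Rightarrow> ('e \<Rightarrow> 'v) \<Rightarrow> ('e \<Rightarrow> 'v) \<Rightarrow> ('e \<Rightarrow> real \<Rightarrow> real \<Rightarrow> real) \<Rightarrow> real" where
  "a0 E org tgt H = Max ((\<lambda>e. if org e = tgt e then crit_closed (H e)
                               else (SUP s\<in>{0..1}. INF p. H e s p)) ` E)"

definition sigma :: "('e \<Rightarrow> real \<Rightarrow> real \<Rightarrow> real) \<Rightarrow> real \<Rightarrow> 'e \<Rightarrow> real" where
  "sigma H a e = integral {0..1} (\<lambda>t. Sup {p. H e t p = a})"

definition is_cycle :: "'e set \<Rightarrow> ('e \<Rightarrow> 'v) \<Rightarrow> ('e \<Rightarrow> 'v) \<Rightarrow> 'e list \<Rightarrow> bool" where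
  "is_cycle E org tgt xs \<longleftrightarrow> xs \<noteq> [] \<and> set xs \<subseteq> E \<and>
     (\<forall>j. Suc j < length xs \<longrightarrow> tgt (xs ! j) = org (xs ! Suc j)) \<and>
     tgt (last xs) = org (hd xs)"

definition sigma_cycle :: "('e \<Rightarrow> real \<Rightarrow> real \<Rightarrow> real) \<Rightarrow> real \<Rightarrow> 'e list \<Rightarrow> real" where
  "sigma_cycle H a xs = sum_list (map (sigma H a) xs)"

definition DFE_solution :: "'v set \<Rightarrow> 'e set \<Rightarrow> ('e \<Rightarrow> 'v) \<Rightarrow> ('e \<Rightarrow> 'v) \<Rightarrow> ('e \<Rightarrow> 'e)
     \<Rightarrow> ('e \<Rightarrow> real \<Rightarrow> real \<Rightarrow> real) \<Rightarrow> real \<Rightarrow> ('v \<Rightarrow> real) \<Rightarrow> bool" where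
  "DFE_solution V E org tgt inv_arc H a u \<longleftrightarrow>
     (\<forall>x\<in>V. u x = Min ((\<lambda>e. u (tgt e) + sigma H a (inv_arc e)) ` {e\<in>E. org e = x}))"

end

theory Submission
  imports Defs
begin

text \<open>At every vertex a solution u of (DFE_a) is attained by some arc e, so
  u(o(e)) - u(t(e)) = \<sigma>_a(-e). Following these optimal arcs from any vertex of the finite
  graph must eventually revisit a vertex, which closes a cycle \<zeta>. Along \<zeta> the values
  \<sigma>_a(-e) telescope to 0, and reversing \<zeta> arc by arc yields the required cycle.\<close>

lemma walk_sum_telescope:
  fixes u :: "'v \<Rightarrow> 'a::ab_group_add"
  assumes "xs \<noteq> []" and "\<forall>j. Suc j < length xs \<longrightarrow> tgt (xs ! j) = org (xs ! Suc j)"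
  shows "(\<Sum>e\<leftarrow>xs. u (org e) - u (tgt e)) = u (org (hd xs)) - u (tgt (last xs))"
  using assms
proof (induction xs)
  case Nil
  then show ?case by simp
next
  case (Cons x xs)
  show ?case
  proof (cases "xs = []")
    case True
    then show ?thesis by simp
  next
    case False
    have "\<forall>j. Suc j < length xs \<longrightarrow> tgt (xs ! j) = org (xs ! Suc j)"
      using Cons.prems(2) by (metis Suc_less_eq length_Cons nth_Cons_Suc)
    moreover have "tgt x = org (hd xs)"
      using Cons.prems(2) False by (metis hd_conv_nth length_Cons length_greater_0_conv
          nth_Cons_0 nth_Cons_Suc zero_less_Suc Suc_less_eq)
    ultimately show ?thesis
      using Cons.IH False by simp
  qed
qed

lemma cycle_sum_telescope:
  fixes u :: "'v \<Rightarrow> 'a::ab_group_add"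
  assumes "is_cycle E org tgt \<xi>"
  shows "(\<Sum>e\<leftarrow>\<xi>. u (org e) - u (tgt e)) = 0"
  using assms walk_sum_telescope[of \<xi> tgt org u] unfolding is_cycle_def by simp

lemma is_cycle_rev_map_inv:
  assumes inv: "\<And>e. e \<in> E \<Longrightarrow> inv_arc e \<in> E \<and> org (inv_arc e) = tgt e \<and> tgt (inv_arc e) = org e"
    and cyc: "is_cycle E org tgt \<xi>"
  shows "is_cycle E org tgt (rev (map inv_arc \<xi>))"
  unfolding is_cycle_def
proof (intro conjI allI impI)
  have \<xi>: "\<xi> \<noteq> []" "set \<xi> \<subseteq> E" "tgt (last \<xi>) = org (hd \<xi>)"
    and chain: "\<And>j. Suc j < length \<xi> \<Longrightarrow> tgt (\<xi> ! j) = org (\<xi> ! Suc j)"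
    using cyc unfolding is_cycle_def by auto
  show "rev (map inv_arc \<xi>) \<noteq> []" "set (rev (map inv_arc \<xi>)) \<subseteq> E"
    using \<xi> inv by auto
  show "tgt (last (rev (map inv_arc \<xi>))) = org (hd (rev (map inv_arc \<xi>)))"
    using \<xi> inv by (simp add: last_rev hd_rev last_map hd_map subset_iff)
  fix j
  assume j: "Suc j < length (rev (map inv_arc \<xi>))"
  define k where "k = length \<xi> - Suc (Suc j)"
  have k: "Suc k < length \<xi>" "length \<xi> - Suc j = Suc k" using j by (auto simp: k_def)
  have "\<xi> ! k \<in> E" "\<xi> ! Suc k \<in> E" using k \<xi>(2) by (auto dest: nth_mem)
  then show "tgt (rev (map inv_arc \<xi>) ! j) = org (rev (map inv_arc \<xi>) ! Suc j)"
    using j k chain[OF k(1)] inv by (simp add: rev_nth k_def)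
qed

lemma iterate_repeats:
  assumes "finite V" "x \<in> V" "\<And>y. y \<in> V \<Longrightarrow> g y \<in> V"
  obtains i j where "i < j" "(g ^^ i) x = (g ^^ j) x"
proof -
  have orbit: "(g ^^ n) x \<in> V" for n
    by (induction n) (simp_all add: assms)
  have "\<not> inj_on (\<lambda>n. (g ^^ n) x) {..card V}"
  proof
    assume "inj_on (\<lambda>n. (g ^^ n) x) {..card V}"
    then have "card {..card V} \<le> card V"
      using card_inj_on_le[of _ "{..card V}" V] orbit assms(1) by blast
    then show False by simp
  qed
  then show thesis
    using that unfolding inj_on_def by (metis linorder_neqE_nat)
qed

lemma choice_of_out_arcs_has_cycle:
  assumes "finite V" "x0 \<in> V"
    and f: "\<And>x. x \<in> V \<Longrightarrow> f x \<in> E \<and> org (f x) = x \<and> tgt (f x) \<in> V"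
  obtains \<zeta> where "is_cycle E org tgt \<zeta>" "set \<zeta> \<subseteq> f ` V"
proof -
  define xs where "xs n = ((tgt \<circ> f) ^^ n) x0" for n
  have xsV: "xs n \<in> V" for n
    by (induction n) (auto simp: xs_def assms(2) f)
  have xs_Suc: "xs (Suc n) = tgt (f (xs n))" for n
    by (simp add: xs_def)
  obtain i j where ij: "i < j" "xs i = xs j"
    using iterate_repeats[of V x0 "tgt \<circ> f"] assms unfolding xs_def by auto
  define \<zeta> where "\<zeta> = map (f \<circ> xs) [i..<j]"
  have "is_cycle E org tgt \<zeta>"
    unfolding is_cycle_def
  proof (intro conjI allI impI)
    show "\<zeta> \<noteq> []" "set \<zeta> \<subseteq> E" using ij xsV f by (auto simp: \<zeta>_def)
    show "tgt (\<zeta> ! m) = org (\<zeta> ! Suc m)" if "Suc m < length \<zeta>" for m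
      using that xsV f xs_Suc by (simp add: \<zeta>_def)
    have "[i..<j] = [i..<j - 1] @ [j - 1]"
      using ij(1) upt_Suc_append[of i "j - 1"] by simp
    then have "last \<zeta> = f (xs (j - 1))" by (simp add: \<zeta>_def)
    moreover have "xs j = tgt (f (xs (j - 1)))" using ij(1) xs_Suc[of "j - 1"] by simp
    ultimately show "tgt (last \<zeta>) = org (hd \<zeta>)"
      using ij xsV f by (simp add: \<zeta>_def hd_map)
  qed
  moreover have "set \<zeta> \<subseteq> f ` V" using xsV by (auto simp: \<zeta>_def)
  ultimately show thesis using that by blast
qed

lemma connected_out_arc:
  assumes "graph_ok V E org tgt inv_arc" "graph_connected V E org tgt" "x \<in> V"
  shows "\<exists>e\<in>E. org e = x"
proof -
  obtain e0 where e0: "e0 \<in> E" "org e0 \<in> V"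
    using assms(1) unfolding graph_ok_def by auto
  have "(x, org e0) \<in> {(org e, tgt e) | e. e \<in> E}\<^sup>*"
    using assms(2,3) e0 unfolding graph_connected_def by blast
  then show ?thesis
    using e0 by (cases rule: converse_rtranclE) auto
qed

lemma DFE_solution_attained:
  assumes "DFE_solution V E org tgt inv_arc H a u" "finite E" "x \<in> V" "\<exists>e\<in>E. org e = x"
  shows "\<exists>e\<in>E. org e = x \<and> u x = u (tgt e) + sigma H a (inv_arc e)"
proof -
  have "u x = Min ((\<lambda>e. u (tgt e) + sigma H a (inv_arc e)) ` {e\<in>E. org e = x})"
    using assms(1,3) unfolding DFE_solution_def by blast
  also have "\<dots> \<in> (\<lambda>e. u (tgt e) + sigma H a (inv_arc e)) ` {e\<in>E. org e = x}"
    using assms(2,4) by (intro Min_in) auto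
  finally show ?thesis by auto
qed

theorem proposition6p17:
  fixes V :: "'v set" and E :: "'e set" and org tgt :: "'e \<Rightarrow> 'v" and inv_arc :: "'e \<Rightarrow> 'e"
    and H :: "'e \<Rightarrow> real \<Rightarrow> real \<Rightarrow> real" and a :: real
  assumes "graph_ok V E org tgt inv_arc"
    and "graph_connected V E org tgt"
    and "\<forall>e\<in>E. hamiltonian_ok (H e)"
    and "\<forall>e\<in>E. \<forall>s\<in>{0..1}. \<forall>p. H (inv_arc e) s p = H e (1 - s) (- p)"
    and "a \<ge> a0 E org tgt H"
    and "\<exists>u. DFE_solution V E org tgt inv_arc H a u"
  shows "\<exists>\<xi>. is_cycle E org tgt \<xi> \<and> sigma_cycle H a \<xi> = 0"
proof -
  have graph: "finite V" "finite E" "E \<noteq> {}" "\<And>e. e \<in> E \<Longrightarrow> org e \<in> V \<and> tgt e \<in> V"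
    and inv: "\<And>e. e \<in> E \<Longrightarrow> inv_arc e \<in> E \<and> org (inv_arc e) = tgt e \<and> tgt (inv_arc e) = org e"
    using assms(1) unfolding graph_ok_def by auto
  obtain u where u: "DFE_solution V E org tgt inv_arc H a u" using assms(6) by blast
  obtain f where f: "\<And>x. x \<in> V \<Longrightarrow> f x \<in> E \<and> org (f x) = x \<and>
      u x = u (tgt (f x)) + sigma H a (inv_arc (f x))"
    using DFE_solution_attained[OF u graph(2)] connected_out_arc[OF assms(1,2)] by metis
  obtain x0 where "x0 \<in> V" using graph(3,4) by blast
  then obtain \<zeta> where \<zeta>: "is_cycle E org tgt \<zeta>" "set \<zeta> \<subseteq> f ` V"
    using choice_of_out_arcs_has_cycle[of V x0 f E org tgt] graph f by blast
  have "sigma_cycle H a (rev (map inv_arc \<zeta>)) = (\<Sum>e\<leftarrow>\<zeta>. u (org e) - u (tgt e))"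
    unfolding sigma_cycle_def using \<zeta>(2) f
    by (auto simp: rev_map[symmetric] sum_list_rev o_def intro!: arg_cong[where f = sum_list] map_cong)
  also have "\<dots> = 0" using cycle_sum_telescope[OF \<zeta>(1)] .
  finally show ?thesis
    using is_cycle_rev_map_inv[OF inv \<zeta>(1)] by blast
qed

end
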